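(* Let $0<r_1<r_2<r_3$ and let $f:\mathbb T^2\to\mathbb R$, $f(\alpha,\beta)=C(r_1,r_2,r_3,\alpha,\beta)$. Then $(\alpha,\beta)=(\pi,0)$ is a global minimum point of $f$ (i.e. $c(r_1,r_2,r_3)=f(\pi,0)=\frac1{r_1+r_2}+\frac1{r_2+r_3}+\frac1{r_3-r_1}$) if and only if \[ r_2(r_3-r_1)^3 - r_1(r_3+r_2)^3 - r_3(r_1+r_2)^3 \ \ge\ 0. \] Moreover, if this inequality holds, $(\pi,0)$ is the unique global minimum point of $f$ on $\mathbb T^2$.
   Context: For $r_1,r_2,r_3\ge 0$ and $(\alpha,\beta)\in\mathbb T^2=(\mathbb R/2\pi\mathbb Z)^2$ let \[C(r_1,r_2,r_3,\alpha,\beta)=\frac{1}{\sqrt{r_1^2+r_2^2-2r_1r_2\cos\alpha}}+\frac{1}{\sqrt{r_1^2+r_3^2-2r_1r_3\cos\beta}}+\frac{1}{\sqrt{r_2^2+r_3^2-2r_2r_3\cos(\alpha-\beta)}}\] (value $+\infty$ if a denominator vanishes); this is the Coulomb cost of $v_1=(r_1,0)$, $v_2=r_2(\cos\alpha,\sin\alpha)$, $v_3=r_3(\cos\beta,\sin\beta)$ in $\mathbb R^2$. The radial cost is $c(r_1,r_2,r_3)=\min_{(\alpha,\beta)\in\mathbb T^2}C(r_1,r_2,r_3,\alpha,\beta)$. *)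

theory Defs
  imports Complex_Main
begin

text \<open>Coulomb cost of v1 = (r1,0), v2 = r2(cos a, sin a), v3 = r3(cos b, sin b).
  Angles are real numbers representing points of the torus (R/2 pi Z)^2; the cost is
  2 pi-periodic in each angle. (For pairwise distinct positive radii no denominator vanishes.)\<close>
definition coulomb_cost :: "real \<Rightarrow> real \<Rightarrow> real \<Rightarrow> real \<Rightarrow> real \<Rightarrow> real" where
  "coulomb_cost r1 r2 r3 a b =
     1 / sqrt (r1\<^sup>2 + r2\<^sup>2 - 2 * r1 * r2 * cos a)
   + 1 / sqrt (r1\<^sup>2 + r3\<^sup>2 - 2 * r1 * r3 * cos b)
   + 1 / sqrt (r2\<^sup>2 + r3\<^sup>2 - 2 * r2 * r3 * cos (a - b))"

end

theory Submission
  imports Defs "HOL-Analysis.Complex_Transcendental"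
begin

text \<open>Each term of the cost has the form \<open>1/sqrt(v\<^sup>2 - 2 s p)\<close>, where \<open>p\<close> is the deviation of
  the cosine of the corresponding angle from its value at \<open>(pi, 0)\<close>. Such a term lies above its
  tangent in \<open>p\<close> and below the tangent plus \<open>O(p\<^sup>2)\<close>. The tangent part of
  \<open>f(a, b) - f(pi, 0)\<close> is \<open>w12 (1 + cos a) + w23 (1 + cos (a - b)) - w13 (1 - cos b)\<close>;
  in half angles a weighted Cauchy-Schwarz inequality shows that it is nonnegative for all angles
  as soon as \<open>1/w13 \<ge> 1/w12 + 1/w23\<close>, which is the polynomial condition, and then equality
  forces \<open>cos a = cos (a - b) = -1\<close>. If the condition fails, the tangent part is negative of
  order \<open>h\<^sup>2\<close> along a curve through \<open>(pi, 0)\<close>, while the remainder is \<open>O(h\<^sup>4)\<close>.\<close>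

lemma inverse_tangent_gap:
  fixes u v :: real
  assumes "0 < u" "0 < v"
  shows "1/u - (1/v - (u^2 - v^2)/(2 * v^3)) = (u - v)^2 * (u + 2 * v)/(2 * u * v^3)"
proof -
  have "(1/u - (1/v - (u^2 - v^2)/(2 * v^3))) * (2 * u * v^3) = (u - v)^2 * (u + 2 * v)"
    using assms by (simp add: field_simps power2_eq_square power3_eq_cube)
  then show ?thesis
    using assms by (simp add: eq_divide_eq)
qed

lemma inverse_sqrt_tangent_gap:
  fixes v s p :: real
  assumes "0 < v" "0 < v^2 - 2 * s * p"
  defines "u \<equiv> sqrt (v^2 - 2 * s * p)"
  shows "1/u - (1/v + s/v^3 * p) = (u - v)^2 * (u + 2 * v)/(2 * u * v^3)"
proof -
  have "0 < u" "u^2 = v^2 - 2 * s * p"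
    using assms by simp_all
  moreover have "1/v - (v^2 - 2 * s * p - v^2)/(2 * v^3) = 1/v + s/v^3 * p"
    using assms by (simp add: field_simps)
  ultimately show ?thesis
    using inverse_tangent_gap[of u v] assms(1) by simp
qed

lemma inverse_sqrt_ge_tangent:
  fixes v s p :: real
  assumes "0 < v" "0 < v^2 - 2 * s * p"
  shows "1/v + s/v^3 * p \<le> 1/sqrt (v^2 - 2 * s * p)"
proof -
  define u where "u = sqrt (v^2 - 2 * s * p)"
  have "0 < u"
    using assms unfolding u_def by simp
  then have "0 \<le> (u - v)^2 * (u + 2 * v)/(2 * u * v^3)"
    using assms by simp
  then show ?thesis
    using inverse_sqrt_tangent_gap[OF assms] unfolding u_def by linarith
qed

lemma inverse_sqrt_gt_tangent:
  fixes v s p :: real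
  assumes "0 < v" "0 < v^2 - 2 * s * p" "s * p \<noteq> 0"
  shows "1/v + s/v^3 * p < 1/sqrt (v^2 - 2 * s * p)"
proof -
  define u where "u = sqrt (v^2 - 2 * s * p)"
  have "0 < u" "u^2 = v^2 - 2 * s * p"
    using assms unfolding u_def by simp_all
  then have "u \<noteq> v"
    using assms(3) by auto
  then have "0 < (u - v)^2 * (u + 2 * v)/(2 * u * v^3)"
    using \<open>0 < u\<close> assms by (intro divide_pos_pos mult_pos_pos add_pos_pos) auto
  then show ?thesis
    using inverse_sqrt_tangent_gap[OF assms(1,2)] unfolding u_def by linarith
qed

lemma inverse_sqrt_le_second_order:
  fixes m v s p :: real
  assumes "0 < m" "0 < v" "m^2 \<le> v^2 - 2 * s * p"
  shows "1/sqrt (v^2 - 2 * s * p) \<le> 1/v + s/v^3 * p + 4 * s^2 * (1/(2 * v^5) + 1/(m * v^4)) * p^2"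
proof -
  have "0 < v^2 - 2 * s * p"
    using assms by (smt (verit) zero_less_power)
  define u where "u = sqrt (v^2 - 2 * s * p)"
  have u: "m \<le> u" "u^2 = v^2 - 2 * s * p"
    using assms \<open>0 < v^2 - 2 * s * p\<close> unfolding u_def by (auto intro: real_le_rsqrt)
  then have "0 < u"
    using assms by linarith
  have "- 2 * s * p = (u - v) * (u + v)"
    using u(2) by (simp add: power2_eq_square algebra_simps)
  then have "((u - v) * (u + v))^2 = (- 2 * s * p)^2"
    by simp
  also have "\<dots> = 4 * s^2 * p^2"
    by (simp add: power_mult_distrib)
  finally have "((u - v) * (u + v))^2 = 4 * s^2 * p^2" .
  then have "(u - v)^2 = 4 * s^2 * p^2/(u + v)^2"
    using \<open>0 < u\<close> assms by (simp add: power_mult_distrib eq_divide_eq)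
  also have "\<dots> \<le> 4 * s^2 * p^2/v^2"
    using \<open>0 < u\<close> assms by (intro divide_left_mono power_mono) auto
  finally have square_gap: "(u - v)^2 \<le> 4 * s^2 * p^2/v^2" .
  have "(u + 2 * v)/(2 * u * v^3) = 1/(2 * v^3) + 1/(u * v^2)"
    using \<open>0 < u\<close> assms by (simp add: field_simps power2_eq_square power3_eq_cube)
  also have "\<dots> \<le> 1/(2 * v^3) + 1/(m * v^2)"
    using u(1) assms by (intro add_left_mono divide_left_mono mult_right_mono) auto
  finally have "(u - v)^2 * ((u + 2 * v)/(2 * u * v^3))
      \<le> 4 * s^2 * p^2/v^2 * (1/(2 * v^3) + 1/(m * v^2))"
    using square_gap assms \<open>0 < u\<close> by (intro mult_mono) auto
  also have "\<dots> = 4 * s^2 * (1/(2 * v^5) + 1/(m * v^4)) * p^2"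
    using assms by (simp add: field_simps eval_nat_numeral)
  finally show ?thesis
    using inverse_sqrt_tangent_gap[OF assms(2) \<open>0 < v^2 - 2 * s * p\<close>] unfolding u_def by simp
qed

lemma weighted_square_sum_ge:
  fixes k c1 c3 p q :: real
  assumes "0 < c1" "0 < c3" "0 \<le> k" "k * (c1 + c3) \<le> c1 * c3"
  shows "k * (p + q)^2 \<le> c1 * p^2 + c3 * q^2"
proof -
  have "k * c1 * c3 * (p + q)^2 = k * (c1 + c3) * (c1 * p^2 + c3 * q^2) - k * (c1 * p - c3 * q)^2"
    by (simp add: power2_eq_square algebra_simps)
  also have "\<dots> \<le> k * (c1 + c3) * (c1 * p^2 + c3 * q^2)"
    using assms by simp
  also have "\<dots> \<le> c1 * c3 * (c1 * p^2 + c3 * q^2)"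
    using assms by (intro mult_right_mono) auto
  finally show ?thesis
    using assms by (simp add: mult.assoc mult_le_cancel_left_pos)
qed

text \<open>With half angles this is \<open>k sin\<^sup>2(x - y) \<le> c1 cos\<^sup>2 x + c3 cos\<^sup>2 y\<close>, which follows from
  \<open>|sin(x - y)| \<le> |cos x| + |cos y|\<close> and \<open>weighted_square_sum_ge\<close>.\<close>
lemma weighted_cos_ineq:
  fixes k c1 c3 a b :: real
  assumes "0 < c1" "0 < c3" "0 \<le> k" "k * (c1 + c3) \<le> c1 * c3"
  shows "0 \<le> c1 * (1 + cos a) + c3 * (1 + cos (a - b)) + k * (cos b - 1)"
proof -
  define x where "x = a/2"
  define y where "y = (a - b)/2"
  have a: "a = 2 * x" and a_b: "a - b = 2 * y" and b: "b = 2 * (x - y)"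
    unfolding x_def y_def by (simp_all add: field_simps)
  have "1 + cos a = 2 * (cos x)^2"
    unfolding a cos_double_cos by simp
  moreover have "1 + cos (a - b) = 2 * (cos y)^2"
    unfolding a_b cos_double_cos by simp
  moreover have "cos b - 1 = - 2 * (sin (x - y))^2"
    unfolding b cos_double_sin by simp
  moreover have "\<bar>sin (x - y)\<bar> = \<bar>sin x * cos y - cos x * sin y\<bar>"
    by (simp add: sin_diff)
  moreover have "\<dots> \<le> \<bar>sin x\<bar> * \<bar>cos y\<bar> + \<bar>cos x\<bar> * \<bar>sin y\<bar>"
    by (metis abs_mult abs_triangle_ineq4)
  moreover have "\<dots> \<le> \<bar>cos y\<bar> + \<bar>cos x\<bar>"
    by (intro add_mono mult_left_le_one_le mult_left_le) auto
  ultimately have "(sin (x - y))^2 \<le> (\<bar>cos x\<bar> + \<bar>cos y\<bar>)^2"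
    by (metis abs_ge_zero add.commute order.trans power2_abs power_mono)
  then have "k * (sin (x - y))^2 \<le> k * (\<bar>cos x\<bar> + \<bar>cos y\<bar>)^2"
    using assms(3) by (rule mult_left_mono)
  also have "\<dots> \<le> c1 * \<bar>cos x\<bar>^2 + c3 * \<bar>cos y\<bar>^2"
    by (rule weighted_square_sum_ge[OF assms])
  finally show ?thesis
    using \<open>1 + cos a = _\<close> \<open>1 + cos (a - b) = _\<close> \<open>cos b - 1 = _\<close> by simp
qed

lemma sin_ge_cubic_Taylor:
  fixes x :: real
  shows "x - \<bar>x\<bar>^3/6 \<le> sin x"
proof -
  have "\<bar>sin x - x\<bar> \<le> \<bar>x\<bar>^3/6"
    using Maclaurin_sin_bound[of x 3] by (simp add: sin_coeff_def eval_nat_numeral)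
  then show ?thesis
    by linarith
qed

lemma one_minus_cos_double_le:
  fixes x :: real
  shows "1 - cos (2 * x) \<le> 2 * x^2"
proof -
  have "\<bar>sin x\<bar>^2 \<le> \<bar>x\<bar>^2"
    by (rule power_mono) (simp_all add: abs_sin_x_le_abs_x)
  then show ?thesis
    unfolding cos_double_sin by simp
qed

lemma one_minus_cos_double_ge:
  fixes x :: real
  assumes "0 \<le> x" "x \<le> 1"
  shows "2 * x^2 - 2 * x^4/3 \<le> 1 - cos (2 * x)"
proof -
  have "x * x \<le> 1"
    using assms by (simp add: mult_le_one)
  then have "x * (x * x) \<le> x * 1"
    using assms by (intro mult_left_mono) simp_all
  then have "0 \<le> x - x^3/6"
    using assms by (simp add: eval_nat_numeral)
  then have "(x - x^3/6)^2 \<le> (sin x)^2"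
    using sin_ge_cubic_Taylor[of x] assms by (intro power_mono) simp_all
  moreover have "(x - x^3/6)^2 = x^2 - x^4/3 + x^6/36"
    by (simp add: power2_eq_square algebra_simps eval_nat_numeral)
  moreover have "0 \<le> x^6"
    using assms(1) by simp
  ultimately show ?thesis
    unfolding cos_double_sin by linarith
qed

lemma quartic_perturbation_neg:
  fixes Q K :: real
  assumes "Q < 0" "0 < K"
  obtains h where "0 < h" "h \<le> 1" "2 * Q * h^2 + K * h^4 < 0"
proof -
  define h where "h = min 1 (- Q/K)"
  have h: "0 < h" "h \<le> 1" "h \<le> - Q/K"
    using assms unfolding h_def by (auto simp: divide_neg_pos)
  have "K * h^2 \<le> K * h"
    using h assms by (intro mult_left_mono) (simp_all add: power2_eq_square mult_left_le)
  also have "\<dots> \<le> K * (- Q/K)"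
    using h assms by (intro mult_left_mono) simp_all
  finally have "2 * Q + K * h^2 < 0"
    using assms by simp
  then have "h^2 * (2 * Q + K * h^2) < 0"
    using h by (simp add: mult_pos_neg)
  then have "2 * Q * h^2 + K * h^4 < 0"
    by (simp add: algebra_simps eval_nat_numeral)
  with h show ?thesis
    by (intro that) simp_all
qed

lemma cos_deviations_along_curve:
  fixes lam h :: real
  assumes "0 \<le> lam" "lam \<le> 1" "0 < h" "h \<le> 1"
  defines "a \<equiv> pi + 2 * (lam * h)" and "b \<equiv> 2 * h"
  shows "1 + cos a \<le> 2 * (lam^2 * h^2)" "1 + cos (a - b) \<le> 2 * ((1 - lam)^2 * h^2)"
    "2 * h^2 - 2 * h^4/3 \<le> 1 - cos b"
    "(1 + cos a)^2 + (1 + cos (a - b))^2 + (cos b - 1)^2 \<le> 12 * h^4"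
proof -
  have a_b: "a - b = pi - 2 * ((1 - lam) * h)"
    unfolding a_def b_def by (simp add: algebra_simps)
  have deviations: "1 + cos a = 1 - cos (2 * (lam * h))"
      "1 + cos (a - b) = 1 - cos (2 * ((1 - lam) * h))" "1 - cos b = 1 - cos (2 * h)"
    unfolding a_b unfolding a_def b_def by simp_all
  show upper: "1 + cos a \<le> 2 * (lam^2 * h^2)" "1 + cos (a - b) \<le> 2 * ((1 - lam)^2 * h^2)"
    using one_minus_cos_double_le[of "lam * h"] one_minus_cos_double_le[of "(1 - lam) * h"]
    unfolding deviations by (simp_all add: power_mult_distrib)
  show "2 * h^2 - 2 * h^4/3 \<le> 1 - cos b"
    using one_minus_cos_double_ge[of h] assms unfolding deviations by simp
  have "lam^2 * h^2 \<le> h^2" "(1 - lam)^2 * h^2 \<le> h^2"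
    using assms by (simp_all add: mult_left_le_one_le power_le_one)
  then have "1 + cos a \<le> 2 * h^2" "1 + cos (a - b) \<le> 2 * h^2" "1 - cos b \<le> 2 * h^2"
    using upper one_minus_cos_double_le[of h] unfolding deviations by linarith+
  moreover have "0 \<le> 1 + cos a" "0 \<le> 1 + cos (a - b)" "0 \<le> 1 - cos b"
    using cos_ge_minus_one[of a] cos_ge_minus_one[of "a - b"] cos_le_one[of b] by linarith+
  ultimately have "(1 + cos a)^2 + (1 + cos (a - b))^2 + (1 - cos b)^2 \<le> 3 * (2 * h^2)^2"
    using power_mono[of _ "2 * h^2" 2] by (smt (verit))
  then show "(1 + cos a)^2 + (1 + cos (a - b))^2 + (cos b - 1)^2 \<le> 12 * h^4"
    by (simp add: power_mult_distrib power2_commute[of "cos b"])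
qed

text \<open>\<open>lam = c3/(c1 + c3)\<close> minimises \<open>c1 lam\<^sup>2 + c3 (1 - lam)\<^sup>2\<close>; at \<open>a = pi + 2 lam h\<close>,
  \<open>b = 2 h\<close> the linear part is \<open>2 h\<^sup>2 (c1 c3/(c1 + c3) - k) + O(h\<^sup>4)\<close>.\<close>
lemma weighted_cos_ineq_fails:
  fixes k c1 c3 E :: real
  assumes "0 < c1" "0 < c3" "c1 * c3 < k * (c1 + c3)" "0 \<le> E"
  obtains a b where "c1 * (1 + cos a) + c3 * (1 + cos (a - b)) + k * (cos b - 1)
      + E * ((1 + cos a)^2 + (1 + cos (a - b))^2 + (cos b - 1)^2) < 0"
proof -
  have "0 < c1 + c3"
    using assms by simp
  have "0 < k * (c1 + c3)"
    using assms(1-3) by (smt (verit) mult_pos_pos)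
  then have "0 < k"
    using \<open>0 < c1 + c3\<close> by (simp add: zero_less_mult_iff)
  define lam where "lam = c3/(c1 + c3)"
  have "1 - lam = c1/(c1 + c3)"
    using \<open>0 < c1 + c3\<close> unfolding lam_def by (simp add: field_simps)
  have lam: "0 \<le> lam" "lam \<le> 1"
    using assms \<open>0 < c1 + c3\<close> unfolding lam_def by (simp_all add: pos_divide_le_eq)
  have "c1 * lam^2 + c3 * (1 - lam)^2 = c1 * c3/(c1 + c3) * (lam + (1 - lam))"
    unfolding power2_eq_square \<open>1 - lam = _\<close> unfolding lam_def by (simp add: algebra_simps)
  then have min_form: "c1 * lam^2 + c3 * (1 - lam)^2 - k = c1 * c3/(c1 + c3) - k"
    by simp
  have "c1 * c3/(c1 + c3) - k < 0"
    using assms \<open>0 < c1 + c3\<close> by (simp add: pos_divide_less_eq)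
  moreover have "0 < 2 * k/3 + 12 * E"
    using \<open>0 < k\<close> assms by simp
  ultimately obtain h where h: "0 < h" "h \<le> 1"
    and neg: "2 * (c1 * c3/(c1 + c3) - k) * h^2 + (2 * k/3 + 12 * E) * h^4 < 0"
    using quartic_perturbation_neg by blast
  define a where "a = pi + 2 * (lam * h)"
  define b where "b = 2 * h"
  note bounds = cos_deviations_along_curve[OF lam h, folded a_def b_def]
  have "k * (cos b - 1) \<le> k * (2 * h^4/3 - 2 * h^2)"
    using bounds(3) \<open>0 < k\<close> by (intro mult_left_mono) auto
  moreover have "c1 * (2 * (lam^2 * h^2)) + c3 * (2 * ((1 - lam)^2 * h^2))
      + k * (2 * h^4/3 - 2 * h^2) + E * (12 * h^4)
      = 2 * (c1 * lam^2 + c3 * (1 - lam)^2 - k) * h^2 + (2 * k/3 + 12 * E) * h^4"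
    by (simp add: algebra_simps)
  ultimately have "c1 * (1 + cos a) + c3 * (1 + cos (a - b)) + k * (cos b - 1)
      + E * ((1 + cos a)^2 + (1 + cos (a - b))^2 + (cos b - 1)^2) < 0"
    using mult_left_mono[OF bounds(1) less_imp_le[OF assms(1)]]
      mult_left_mono[OF bounds(2) less_imp_le[OF assms(2)]]
      mult_left_mono[OF bounds(4) assms(4)] neg unfolding min_form by linarith
  then show ?thesis
    by (rule that)
qed

lemma sq_diff_le_radicand:
  fixes x y \<theta> :: real
  assumes "0 \<le> x * y"
  shows "(x - y)^2 \<le> (x + y)^2 - 2 * (x * y) * (1 + cos \<theta>)"
proof -
  have "(x + y)^2 - 2 * (x * y) * (1 + cos \<theta>) = (x - y)^2 + 2 * (x * y) * (1 - cos \<theta>)"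
    by (simp add: power2_eq_square algebra_simps)
  then show ?thesis
    using assms by simp
qed

lemma coulomb_cost_alt:
  "coulomb_cost r1 r2 r3 a b =
     1/sqrt ((r1 + r2)^2 - 2 * (r1 * r2) * (1 + cos a))
   + 1/sqrt ((r3 - r1)^2 - 2 * (r1 * r3) * (cos b - 1))
   + 1/sqrt ((r2 + r3)^2 - 2 * (r2 * r3) * (1 + cos (a - b)))"
  unfolding coulomb_cost_def by (simp add: power2_eq_square algebra_simps)

context
  fixes r1 r2 r3 :: real
  assumes radii: "0 < r1" "r1 < r2" "r2 < r3"
begin

text \<open>The weight of a pair \<open>i, j\<close> is \<open>r\<^sub>i r\<^sub>j / |v\<^sub>i - v\<^sub>j|\<^sup>3\<close> at \<open>(pi, 0)\<close>: the derivative
  of \<open>1/|v\<^sub>i - v\<^sub>j|\<close> with respect to the cosine of the angle between \<open>v\<^sub>i\<close> and \<open>v\<^sub>j\<close>.\<close>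
definition weight12 :: real where "weight12 = r1 * r2/(r1 + r2)^3"
definition weight23 :: real where "weight23 = r2 * r3/(r2 + r3)^3"
definition weight13 :: real where "weight13 = r1 * r3/(r3 - r1)^3"

lemma weights_pos: "0 < weight12" "0 < weight23" "0 < weight13"
  using radii unfolding weight12_def weight23_def weight13_def by simp_all

lemma weights_condition_iff:
  "weight13 * (weight12 + weight23) \<le> weight12 * weight23
    \<longleftrightarrow> 0 \<le> r2 * (r3 - r1)^3 - r1 * (r3 + r2)^3 - r3 * (r1 + r2)^3"
proof -
  define D where "D = r2 * (r3 - r1)^3 - r1 * (r3 + r2)^3 - r3 * (r1 + r2)^3"
  define N where "N = r1 * r2 * r3/((r1 + r2)^3 * (r3 - r1)^3 * (r2 + r3)^3)"
  have "0 < N"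
    using radii unfolding N_def by simp
  have "r1 + r2 \<noteq> 0" "r3 - r1 \<noteq> 0" "r2 + r3 \<noteq> 0"
    using radii by auto
  then have identity: "weight12 * weight23 - weight13 * (weight12 + weight23) = D * N"
    unfolding weight12_def weight23_def weight13_def D_def N_def by (simp add: field_simps)
  have "weight13 * (weight12 + weight23) \<le> weight12 * weight23
      \<longleftrightarrow> 0 \<le> weight12 * weight23 - weight13 * (weight12 + weight23)"
    by simp
  also have "\<dots> \<longleftrightarrow> 0 \<le> D"
    unfolding identity using \<open>0 < N\<close> by (simp add: zero_le_mult_iff)
  finally show ?thesis
    unfolding D_def .
qed

lemma coulomb_cost_collinear:
  "coulomb_cost r1 r2 r3 pi 0 = 1/(r1 + r2) + 1/(r3 - r1) + 1/(r2 + r3)"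
  using radii unfolding coulomb_cost_alt by simp

lemma coulomb_radicands_ge:
  "(r2 - r1)^2 \<le> (r1 + r2)^2 - 2 * (r1 * r2) * (1 + cos a)"
  "(r3 - r1)^2 \<le> (r3 - r1)^2 - 2 * (r1 * r3) * (cos b - 1)"
  "(r3 - r2)^2 \<le> (r2 + r3)^2 - 2 * (r2 * r3) * (1 + cos c)"
proof -
  show "(r2 - r1)^2 \<le> (r1 + r2)^2 - 2 * (r1 * r2) * (1 + cos a)"
    using sq_diff_le_radicand[of r1 r2 a] radii by (simp add: power2_commute)
  show "(r3 - r2)^2 \<le> (r2 + r3)^2 - 2 * (r2 * r3) * (1 + cos c)"
    using sq_diff_le_radicand[of r2 r3 c] radii by (simp add: power2_commute)
  have "0 \<le> (r1 * r3) * (1 - cos b)"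
    using radii by simp
  then show "(r3 - r1)^2 \<le> (r3 - r1)^2 - 2 * (r1 * r3) * (cos b - 1)"
    by (simp add: algebra_simps)
qed

lemma radii_gaps_pos: "0 < r1 + r2" "0 < r3 - r1" "0 < r2 + r3" "0 < r2 - r1" "0 < r3 - r2"
  using radii by simp_all

lemma coulomb_cost_ge_tangent:
  shows "coulomb_cost r1 r2 r3 pi 0 + weight12 * (1 + cos a) + weight23 * (1 + cos (a - b))
      + weight13 * (cos b - 1) \<le> coulomb_cost r1 r2 r3 a b"
    and "cos a \<noteq> -1 \<or> cos (a - b) \<noteq> -1 \<Longrightarrow> coulomb_cost r1 r2 r3 pi 0 + weight12 * (1 + cos a)
      + weight23 * (1 + cos (a - b)) + weight13 * (cos b - 1) < coulomb_cost r1 r2 r3 a b"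
proof -
  note pos = radii_gaps_pos
  have radicands: "0 < (r1 + r2)^2 - 2 * (r1 * r2) * (1 + cos a)"
      "0 < (r3 - r1)^2 - 2 * (r1 * r3) * (cos b - 1)"
      "0 < (r2 + r3)^2 - 2 * (r2 * r3) * (1 + cos (a - b))"
    using coulomb_radicands_ge(1)[of a] coulomb_radicands_ge(2)[of b] coulomb_radicands_ge(3)[of "a - b"]
      pos by (smt (verit) zero_less_power)+
  note tangents = inverse_sqrt_ge_tangent[OF pos(1) radicands(1)]
    inverse_sqrt_ge_tangent[OF pos(2) radicands(2)] inverse_sqrt_ge_tangent[OF pos(3) radicands(3)]
  note cost = coulomb_cost_alt[of r1 r2 r3 a b] coulomb_cost_collinear
  show "coulomb_cost r1 r2 r3 pi 0 + weight12 * (1 + cos a) + weight23 * (1 + cos (a - b))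
      + weight13 * (cos b - 1) \<le> coulomb_cost r1 r2 r3 a b"
    unfolding cost weight12_def weight23_def weight13_def using tangents by linarith
  assume "cos a \<noteq> -1 \<or> cos (a - b) \<noteq> -1"
  then have "1/(r1 + r2) + weight12 * (1 + cos a) < 1/sqrt ((r1 + r2)^2 - 2 * (r1 * r2) * (1 + cos a))
      \<or> 1/(r2 + r3) + weight23 * (1 + cos (a - b))
        < 1/sqrt ((r2 + r3)^2 - 2 * (r2 * r3) * (1 + cos (a - b)))"
    using inverse_sqrt_gt_tangent[OF pos(1) radicands(1)] inverse_sqrt_gt_tangent[OF pos(3) radicands(3)]
      radii unfolding weight12_def weight23_def by (auto simp: add_eq_0_iff)
  then show "coulomb_cost r1 r2 r3 pi 0 + weight12 * (1 + cos a)
      + weight23 * (1 + cos (a - b)) + weight13 * (cos b - 1) < coulomb_cost r1 r2 r3 a b"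
    unfolding cost unfolding weight12_def weight23_def weight13_def using tangents by linarith
qed

lemma coulomb_cost_le_second_order:
  obtains E where "0 \<le> E"
    and "\<And>a b. coulomb_cost r1 r2 r3 a b \<le> coulomb_cost r1 r2 r3 pi 0 + weight12 * (1 + cos a)
      + weight23 * (1 + cos (a - b)) + weight13 * (cos b - 1)
      + E * ((1 + cos a)^2 + (1 + cos (a - b))^2 + (cos b - 1)^2)"
proof -
  note pos = radii_gaps_pos
  define C12 where "C12 = 4 * (r1 * r2)^2 * (1/(2 * (r1 + r2)^5) + 1/((r2 - r1) * (r1 + r2)^4))"
  define C13 where "C13 = 4 * (r1 * r3)^2 * (1/(2 * (r3 - r1)^5) + 1/((r3 - r1) * (r3 - r1)^4))"
  define C23 where "C23 = 4 * (r2 * r3)^2 * (1/(2 * (r2 + r3)^5) + 1/((r3 - r2) * (r2 + r3)^4))"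
  have C: "0 \<le> C12" "0 \<le> C13" "0 \<le> C23"
    unfolding C12_def C13_def C23_def using pos by simp_all
  show ?thesis
  proof (rule that)
    show "0 \<le> C12 + C13 + C23"
      using C by simp
    fix a b
    note second_order = inverse_sqrt_le_second_order[OF pos(4) pos(1) coulomb_radicands_ge(1)[of a]]
      inverse_sqrt_le_second_order[OF pos(2) pos(2) coulomb_radicands_ge(2)[of b]]
      inverse_sqrt_le_second_order[OF pos(5) pos(3) coulomb_radicands_ge(3)[of "a - b"]]
    have "C12 * (1 + cos a)^2 + C13 * (cos b - 1)^2 + C23 * (1 + cos (a - b))^2
        \<le> (C12 + C13 + C23) * ((1 + cos a)^2 + (1 + cos (a - b))^2 + (cos b - 1)^2)"
      using C by (simp add: algebra_simps add_increasing add_increasing2)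
    then show "coulomb_cost r1 r2 r3 a b \<le> coulomb_cost r1 r2 r3 pi 0 + weight12 * (1 + cos a)
      + weight23 * (1 + cos (a - b)) + weight13 * (cos b - 1)
      + (C12 + C13 + C23) * ((1 + cos a)^2 + (1 + cos (a - b))^2 + (cos b - 1)^2)"
      unfolding coulomb_cost_alt[of r1 r2 r3 a b] coulomb_cost_collinear
      using second_order unfolding weight12_def weight23_def weight13_def C12_def C13_def C23_def
      by linarith
  qed
qed

lemma coulomb_cost_ge_collinear:
  assumes "weight13 * (weight12 + weight23) \<le> weight12 * weight23"
  shows "coulomb_cost r1 r2 r3 pi 0 \<le> coulomb_cost r1 r2 r3 a b"
  using coulomb_cost_ge_tangent(1)[of a b]
    weighted_cos_ineq[OF weights_pos(1,2) less_imp_le[OF weights_pos(3)] assms, of a b]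
  by linarith

lemma coulomb_cost_le_collinear_cos_eq:
  assumes "weight13 * (weight12 + weight23) \<le> weight12 * weight23"
    and "coulomb_cost r1 r2 r3 a b \<le> coulomb_cost r1 r2 r3 pi 0"
  shows "cos a = -1" "cos (a - b) = -1"
  using coulomb_cost_ge_tangent(2)[of a b] assms(2)
    weighted_cos_ineq[OF weights_pos(1,2) less_imp_le[OF weights_pos(3)] assms(1), of a b]
  by fastforce+

lemma coulomb_cost_below_collinear:
  assumes "weight12 * weight23 < weight13 * (weight12 + weight23)"
  obtains a b where "coulomb_cost r1 r2 r3 a b < coulomb_cost r1 r2 r3 pi 0"
proof -
  obtain E where E: "0 \<le> E"
    "\<And>a b. coulomb_cost r1 r2 r3 a b \<le> coulomb_cost r1 r2 r3 pi 0 + weight12 * (1 + cos a)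
      + weight23 * (1 + cos (a - b)) + weight13 * (cos b - 1)
      + E * ((1 + cos a)^2 + (1 + cos (a - b))^2 + (cos b - 1)^2)"
    using coulomb_cost_le_second_order by blast
  obtain a b where "weight12 * (1 + cos a) + weight23 * (1 + cos (a - b)) + weight13 * (cos b - 1)
      + E * ((1 + cos a)^2 + (1 + cos (a - b))^2 + (cos b - 1)^2) < 0"
    using weighted_cos_ineq_fails[OF weights_pos(1,2) assms E(1)] by blast
  then have "coulomb_cost r1 r2 r3 a b < coulomb_cost r1 r2 r3 pi 0"
    using E(2)[of a b] by linarith
  then show ?thesis
    by (rule that)
qed

end

theorem theorem1p3:
  fixes r1 r2 r3 :: real
  assumes "0 < r1" and "r1 < r2" and "r2 < r3"
  shows "((\<forall>a b. coulomb_cost r1 r2 r3 pi 0 \<le> coulomb_cost r1 r2 r3 a b)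
           \<longleftrightarrow> r2 * (r3 - r1) ^ 3 - r1 * (r3 + r2) ^ 3 - r3 * (r1 + r2) ^ 3 \<ge> 0)
       \<and> (r2 * (r3 - r1) ^ 3 - r1 * (r3 + r2) ^ 3 - r3 * (r1 + r2) ^ 3 \<ge> 0 \<longrightarrow>
           (\<forall>a b. coulomb_cost r1 r2 r3 a b \<le> coulomb_cost r1 r2 r3 pi 0 \<longrightarrow>
              (\<exists>k::int. a = pi + 2 * pi * of_int k) \<and> (\<exists>m::int. b = 2 * pi * of_int m)))"
proof -
  note condition = weights_condition_iff[OF assms]
  have "(\<forall>a b. coulomb_cost r1 r2 r3 pi 0 \<le> coulomb_cost r1 r2 r3 a b)
      \<longleftrightarrow> r2 * (r3 - r1) ^ 3 - r1 * (r3 + r2) ^ 3 - r3 * (r1 + r2) ^ 3 \<ge> 0"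
    using coulomb_cost_ge_collinear[OF assms] coulomb_cost_below_collinear[OF assms] condition
    by (metis not_le)
  moreover have "(\<exists>k::int. a = pi + 2 * pi * of_int k) \<and> (\<exists>m::int. b = 2 * pi * of_int m)"
    if "r2 * (r3 - r1) ^ 3 - r1 * (r3 + r2) ^ 3 - r3 * (r1 + r2) ^ 3 \<ge> 0"
      and "coulomb_cost r1 r2 r3 a b \<le> coulomb_cost r1 r2 r3 pi 0" for a b
  proof -
    have "cos a = -1" "cos (a - b) = -1"
      using coulomb_cost_le_collinear_cos_eq[OF assms] condition that by blast+
    then obtain n m :: int where "a = (2 * n + 1) * pi" "a - b = (2 * m + 1) * pi"
      by (auto simp: cos_eq_minus1)
    then have "a = pi + 2 * pi * of_int n" "b = 2 * pi * of_int (n - m)"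
      by (simp_all add: algebra_simps)
    then show ?thesis
      by blast
  qed
  ultimately show ?thesis
    by blast
qed

end
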